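(* Let $(a,b,c)$ be a Markov triple, let $m_1,m_2$ be positive integers with $a^2m_1+b^2m_2=c^2$, and let $l_2=(m_2+1)/a$ (a positive integer). Put $\mathbf{u}_1=(b^2,-m_1)$, $\mathbf{u}_2=-(a^2,m_2)$, $\mathbf{u}_3=(0,1)$ and $\mathbf{w}_1=-(a,l_2)$. Let $\Delta\subset\mathbb{R}^2$ be the triangle with vertices $V_0$, $V_1=V_0+a^2\mathbf{u}_1$, $V_2=V_1+b^2\mathbf{u}_2$ (so that $V_0=V_2+c^2\mathbf{u}_3$). Let $\ell$ be the line through $V_2$ in direction $\mathbf{w}_1$, let $Q$ be the point where $\ell$ meets the edge $[V_0,V_1]$, and let $M$ be the affine map of $\mathbb{R}^2$ fixing $\ell$ pointwise with linear part $v\mapsto v+\det(\mathbf{w}_1,v)\,\mathbf{w}_1$. Let $\Delta'=\mathrm{conv}(V_0,Q,V_2)\cup M(\mathrm{conv}(Q,V_1,V_2))$ be the base diagram obtained from $\Delta$ by transferring the cut (the cut being the segment of $\ell$ from the node to $V_2$) to its left. Then $\Delta'$ is a triangle whose three edges have affine lengths $\lambda c^2$, $\lambda b^2$, $\lambda a'^2$ for some $\lambda>0$, where $a'=3bc-a$.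
   Context: A Markov triple is a triple of positive integers $(a,b,c)$ with $a^2+b^2+c^2=3abc$. A vector $v\in\mathbb{Z}^2$ is primitive if it is not a positive integer multiple of another lattice vector; a vector $w=\lambda v$ with $v$ primitive and $\lambda\geq0$ has affine length $\lambda$, and the affine length of a segment with rational slope is the affine length of its displacement vector. The triangle $\Delta$ (with a nodal fiber on $\ell$ near each vertex and a cut from the node to the vertex) is the base diagram of an almost toric fibration of $\mathbb{CP}^2$ obtained from $\mathbb{CP}(a^2,b^2,c^2)$ by rational blowdowns at its three orbifold points; $M$ is the monodromy across the cut at $V_2$, and it sends $\mathbf{u}_2$ to $\mathbf{u}_3$. Transferring the cut produces another base diagram $\Delta'$ of the same almost toric fibration, with the cut now running from the node to $Q$. *)

theory Defs
  imports "HOL-Analysis.Analysis"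
begin

definition primitive :: "int \<times> int \<Rightarrow> bool" where
  "primitive v \<longleftrightarrow>
     \<not> (\<exists>(k::int) (u::int \<times> int). k > 0 \<and> u \<noteq> v \<and> v = (k * fst u, k * snd u))"

definition has_affine_length :: "real \<times> real \<Rightarrow> real \<Rightarrow> bool" where
  "has_affine_length w L \<longleftrightarrow>
     L \<ge> 0 \<and> (\<exists>v. primitive v \<and> w = (L * of_int (fst v), L * of_int (snd v)))"

definition det2 :: "real \<times> real \<Rightarrow> real \<times> real \<Rightarrow> real" where
  "det2 w v = fst w * snd v - snd w * fst v"

definition shear_map :: "real \<times> real \<Rightarrow> real \<times> real \<Rightarrow> real \<times> real \<Rightarrow> real \<times> real" where
  "shear_map P w x = P + ((x - P) + det2 w (x - P) *\<^sub>R w)"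

end

theory Submission
  imports Defs
begin

text \<open>The line \<open>\<ell>\<close> meets \<open>[V\<^sub>0, V\<^sub>1]\<close> at the fraction \<open>c\<^sup>2/(b\<^sup>2 + c\<^sup>2)\<close> of the
  edge, and the shear maps \<open>V\<^sub>1\<close> to
  \<open>R = V\<^sub>0 - (0, b\<^sup>2 + c\<^sup>2)\<close> while fixing \<open>Q\<close> and \<open>V\<^sub>2\<close>. Since \<open>V\<^sub>2\<close> lies on the
  segment \<open>[V\<^sub>0, R]\<close>, the two pieces glue to the triangle \<open>V\<^sub>0 Q R\<close>. The Markov
  equation gives \<open>a a' = b\<^sup>2 + c\<^sup>2\<close>, so with \<open>\<lambda> = a/a'\<close> the edges are \<open>\<lambda> c\<^sup>2 (b\<^sup>2, -m\<^sub>1)\<close>,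
  \<open>\<lambda> b\<^sup>2 (-c\<^sup>2, -k)\<close> and \<open>\<lambda> a'\<^sup>2 (0, 1)\<close>, where \<open>b\<^sup>2 k = a'\<^sup>2 - c\<^sup>2 m\<^sub>1\<close>. The
  integrality of \<open>k\<close> and the primitivity of these directions come from the pairwise
  coprimality of Markov numbers, proved by Vieta descent.\<close>

definition markov_triple :: "int \<Rightarrow> int \<Rightarrow> int \<Rightarrow> bool" where
  "markov_triple a b c \<longleftrightarrow> 0 < a \<and> 0 < b \<and> 0 < c \<and> a^2 + b^2 + c^2 = 3 * a * b * c"

lemma markov_triple_rotate: "markov_triple a b c \<longleftrightarrow> markov_triple b c a"
  unfolding markov_triple_def by (auto simp: ac_simps)

lemma markov_vieta_product:
  assumes "markov_triple a b c"
  shows "a * (3 * b * c - a) = b^2 + c^2"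
  using assms unfolding markov_triple_def by (simp add: algebra_simps power2_eq_square)

lemma markov_neighbour_pos:
  assumes "markov_triple a b c"
  shows "0 < 3 * b * c - a"
proof -
  have "0 < a * (3 * b * c - a)"
    using assms unfolding markov_vieta_product[OF assms] markov_triple_def by (simp add: add_pos_pos)
  then show ?thesis
    using assms zero_less_mult_pos unfolding markov_triple_def by blast
qed

lemma markov_triple_neighbour:
  assumes "markov_triple a b c"
  shows "markov_triple (3 * b * c - a) b c"
  using assms markov_neighbour_pos[OF assms] markov_vieta_product[OF assms]
  unfolding markov_triple_def by (simp add: algebra_simps power2_eq_square)

text \<open>The two solutions of \<open>t^2 - 3bc t + b^2 + c^2 = 0\<close> are \<open>a\<close> and \<open>3bc - a\<close>, and the
  polynomial is negative at \<open>t = b\<close>; so \<open>b\<close> separates them and the smaller one is below \<open>a\<close>.\<close>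
lemma markov_neighbour_less:
  assumes "markov_triple a b c" "c \<le> b" "b \<le> a" "2 \<le> c"
  shows "3 * b * c - a < a"
proof -
  define e where "e = 3 * b * c - a"
  have "(b - a) * (b - e) = 2 * b^2 + c^2 - 3 * b^2 * c"
    using markov_vieta_product[OF assms(1)] unfolding e_def by (simp add: algebra_simps power2_eq_square)
  also have "\<dots> < 0"
  proof -
    have "3 * b^2 * c \<ge> 6 * b^2" "c^2 \<le> b^2" "0 < b^2"
      using assms unfolding markov_triple_def by (simp_all add: power_mono)
    then show ?thesis by linarith
  qed
  finally have "(b - a) * (b - e) < 0" .
  then show ?thesis
    unfolding e_def[symmetric] using assms(3) by (smt (verit) mult_nonpos_nonpos)
qed

lemma markov_triple_sorted:
  assumes "markov_triple a b c"
  obtains x y z where "markov_triple x y z" "z \<le> y" "y \<le> x"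
    "{x, y, z} = {a, b, c}" "x + y + z = a + b + c"
proof -
  consider "c \<le> b \<and> b \<le> a" | "b \<le> c \<and> c \<le> a" | "c \<le> a \<and> a \<le> b"
    | "a \<le> c \<and> c \<le> b" | "b \<le> a \<and> a \<le> c" | "a \<le> b \<and> b \<le> c"
    by linarith
  then show thesis
  proof cases
    case 1 then show ?thesis using that[of a b c] assms by simp
  next
    case 2 then show ?thesis using that[of a c b] assms
        unfolding markov_triple_def by (auto simp: ac_simps insert_commute)
  next
    case 3 then show ?thesis using that[of b a c] assms
        unfolding markov_triple_def by (auto simp: ac_simps insert_commute)
  next
    case 4 then show ?thesis using that[of b c a] assms
        unfolding markov_triple_def by (auto simp: ac_simps insert_commute)
  next
    case 5 then show ?thesis using that[of c a b] assms
        unfolding markov_triple_def by (auto simp: ac_simps insert_commute)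
  next
    case 6 then show ?thesis using that[of c b a] assms
        unfolding markov_triple_def by (auto simp: ac_simps insert_commute)
  qed
qed

lemma markov_triple_no_common_factor:
  assumes "markov_triple a b c" "2 \<le> d"
  shows "\<not> (d dvd a \<and> d dvd b \<and> d dvd c)"
  using assms(1)
proof (induction "nat (a + b + c)" arbitrary: a b c rule: less_induct)
  case less
  obtain x y z where xyz: "markov_triple x y z" "z \<le> y" "y \<le> x"
    "{x, y, z} = {a, b, c}" "x + y + z = a + b + c"
    using markov_triple_sorted[OF less.prems] .
  show ?case
  proof
    assume "d dvd a \<and> d dvd b \<and> d dvd c"
    then have dvd: "d dvd x" "d dvd y" "d dvd z"
      using xyz(4) by (metis insertCI insertE singletonD)+
    then have "2 \<le> z"
      using assms(2) xyz(1) zdvd_imp_le unfolding markov_triple_def by fastforce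
    then have "3 * y * z - x < x"
      using markov_neighbour_less xyz by blast
    moreover have "d dvd 3 * y * z - x" using dvd by simp
    ultimately show False
      using less.hyps[of "3 * y * z - x" y z] dvd xyz markov_triple_neighbour[OF xyz(1)]
        markov_neighbour_pos[OF xyz(1)] unfolding markov_triple_def by auto
  qed
qed

lemma markov_triple_coprime:
  assumes "markov_triple a b c"
  shows "coprime a b"
proof (rule ccontr)
  define d where "d = gcd a b"
  assume "\<not> coprime a b"
  then have "2 \<le> d"
    using assms unfolding d_def markov_triple_def coprime_iff_gcd_eq_1
    by (smt (verit) gcd_pos_int)
  have "d^2 dvd 3 * a * b * c" "d^2 dvd a^2 + b^2"
    unfolding d_def power2_eq_square by (simp_all add: mult_dvd_mono)
  moreover have "c^2 = 3 * a * b * c - (a^2 + b^2)"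
    using assms unfolding markov_triple_def by simp
  ultimately have "d^2 dvd c^2"
    by (metis dvd_diff)
  then show False
    using markov_triple_no_common_factor[OF assms \<open>2 \<le> d\<close>] unfolding d_def by simp
qed

lemma coprime_imp_primitive:
  assumes "coprime p q"
  shows "primitive (p, q)"
  unfolding primitive_def
proof (intro notI, elim exE conjE)
  fix k :: int and u :: "int \<times> int"
  assume "0 < k" "u \<noteq> (p, q)" and pq: "(p, q) = (k * fst u, k * snd u)"
  then have "k dvd p" "k dvd q" by auto
  with assms have "k = 1"
    using \<open>0 < k\<close> coprime_common_divisor by fastforce
  with pq \<open>u \<noteq> (p, q)\<close> show False by (simp add: prod_eq_iff)
qed

lemma has_affine_length_coprime:
  assumes "coprime p q" "0 \<le> L"
  shows "has_affine_length (L *\<^sub>R (of_int p, of_int q)) L"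
  using assms coprime_imp_primitive unfolding has_affine_length_def by fastforce

lemma shear_map_fixes_line: "shear_map P w (P + t *\<^sub>R w) = P + t *\<^sub>R w"
  by (simp add: shear_map_def det2_def)

lemma shear_map_convex_hull: "shear_map P w ` (convex hull S) = convex hull (shear_map P w ` S)"
proof -
  define L where "L = (\<lambda>v. v + det2 w v *\<^sub>R w)"
  have lin: "linear L"
    unfolding L_def by (rule linearI) (auto simp: det2_def algebra_simps)
  have shear: "shear_map P w = (\<lambda>x. (P - L P) + x) \<circ> L"
    using linear_diff[OF lin] unfolding shear_map_def L_def by (auto simp: fun_eq_iff algebra_simps)
  show ?thesis
    unfolding shear image_comp[symmetric]
    by (simp add: convex_hull_linear_image[OF lin] convex_hull_translation)
qed

lemma not_collinear_if_det2:
  assumes "det2 u v \<noteq> 0"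
  shows "\<not> collinear {P, P + u, P + v}"
proof
  assume "collinear {P, P + u, P + v}"
  then obtain d where "\<forall>x\<in>{P, P + u, P + v}. \<forall>y\<in>{P, P + u, P + v}. \<exists>r. x - y = r *\<^sub>R d"
    unfolding collinear_def by blast
  then obtain r s where "u = r *\<^sub>R d" "v = s *\<^sub>R d"
    by (metis add_diff_cancel_left' insertCI)
  then have "det2 u v = 0" by (simp add: det2_def)
  with assms show False by simp
qed

text \<open>The weight of \<open>C\<close> is moved onto \<open>D\<close> at the expense of \<open>A\<close>; in the other case of
  \<open>convex_hull_3_split\<close> the roles of \<open>A\<close> and \<open>C\<close> are exchanged.\<close>
lemma convex_comb_in_split_hull:
  fixes A B C D :: "'a::real_vector"
  assumes D: "D = (1 - \<mu>) *\<^sub>R A + \<mu> *\<^sub>R C" and "0 < \<mu>"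
    and uvw: "0 \<le> u" "0 \<le> v" "0 \<le> w" "u + v + w = 1" and "w * (1 - \<mu>) \<le> u * \<mu>"
  shows "u *\<^sub>R A + v *\<^sub>R B + w *\<^sub>R C \<in> convex hull {A, B, D}"
proof -
  define u' d where "u' = u - w * (1 - \<mu>) / \<mu>" and "d = w / \<mu>"
  have coeffs: "u' + d * (1 - \<mu>) = u" "d * \<mu> = w"
    using \<open>0 < \<mu>\<close> unfolding u'_def d_def by (simp_all add: field_simps)
  have "u' *\<^sub>R A + v *\<^sub>R B + d *\<^sub>R D = (u' + d * (1 - \<mu>)) *\<^sub>R A + v *\<^sub>R B + (d * \<mu>) *\<^sub>R C"
    unfolding D by (simp add: algebra_simps)
  then have "u *\<^sub>R A + v *\<^sub>R B + w *\<^sub>R C = u' *\<^sub>R A + v *\<^sub>R B + d *\<^sub>R D"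
    unfolding coeffs by simp
  moreover have "0 \<le> u'" "0 \<le> d"
    using assms unfolding u'_def d_def by (simp_all add: field_simps)
  moreover have "u' + v + d = 1"
    using coeffs uvw(4) by (simp add: algebra_simps)
  ultimately show ?thesis
    unfolding convex_hull_3 using uvw by blast
qed

lemma convex_hull_3_split:
  fixes A B C D :: "'a::real_vector"
  assumes D: "D = (1 - \<mu>) *\<^sub>R A + \<mu> *\<^sub>R C" and \<mu>: "0 < \<mu>" "\<mu> < 1"
  shows "convex hull {A, B, D} \<union> convex hull {B, D, C} = convex hull {A, B, C}"
proof
  have "D \<in> convex hull {A, B, C}"
    unfolding convex_hull_3 D using \<mu> by (intro CollectI exI[of _ "1 - \<mu>"] exI[of _ 0] exI[of _ \<mu>]) auto
  then show "convex hull {A, B, D} \<union> convex hull {B, D, C} \<subseteq> convex hull {A, B, C}"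
    by (simp add: hull_inc hull_minimal)
next
  show "convex hull {A, B, C} \<subseteq> convex hull {A, B, D} \<union> convex hull {B, D, C}"
  proof
    fix x assume "x \<in> convex hull {A, B, C}"
    then obtain u v w where x: "x = u *\<^sub>R A + v *\<^sub>R B + w *\<^sub>R C"
      and uvw: "0 \<le> u" "0 \<le> v" "0 \<le> w" "u + v + w = 1"
      unfolding convex_hull_3 by blast
    have D': "D = (1 - (1 - \<mu>)) *\<^sub>R C + (1 - \<mu>) *\<^sub>R A" using D by simp
    show "x \<in> convex hull {A, B, D} \<union> convex hull {B, D, C}"
    proof (cases "w * (1 - \<mu>) \<le> u * \<mu>")
      case True
      then show ?thesis
        using convex_comb_in_split_hull[OF D \<mu>(1) uvw] x by simp
    next
      case False
      then have "w *\<^sub>R C + v *\<^sub>R B + u *\<^sub>R A \<in> convex hull {C, B, D}"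
        using \<mu> uvw by (intro convex_comb_in_split_hull[OF D']) (auto simp: algebra_simps)
      then show ?thesis
        unfolding x by (simp add: algebra_simps insert_commute)
    qed
  qed
qed

lemma markov_weight_coprime:
  assumes "markov_triple a b c" "a^2 * m1 + b^2 * m2 = c^2"
  shows "coprime (b^2) m1"
proof (rule coprimeI)
  fix d assume d: "d dvd b^2" "d dvd m1"
  then have "d dvd c^2"
    using assms(2) by (metis dvd_add dvd_mult dvd_mult2)
  moreover have "coprime (b^2) (c^2)"
    using markov_triple_coprime[of b c a] assms(1) markov_triple_rotate[of a b c] by simp
  ultimately show "is_unit d"
    using d(1) coprime_common_divisor by blast
qed

lemma markov_transfer_direction:
  assumes "markov_triple a b c" "a^2 * m1 + b^2 * m2 = c^2"
  obtains k where "b^2 * k = (3 * b * c - a)^2 - c^2 * m1" "coprime (c^2) k"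
proof -
  define X where "X = (3 * b * c - a)^2 - c^2 * m1"
  have "a^2 * X = (a * (3 * b * c - a))^2 - c^2 * (a^2 * m1)"
    unfolding X_def by (simp add: algebra_simps power2_eq_square)
  also have "\<dots> = (b^2 + c^2)^2 - c^2 * (c^2 - b^2 * m2)"
    using assms(2) by (simp add: markov_vieta_product[OF assms(1)] eq_diff_eq)
  also have "\<dots> = b^2 * (b^2 + 2 * c^2 + c^2 * m2)"
    by (simp add: algebra_simps power2_eq_square)
  finally have aX: "a^2 * X = b^2 * (b^2 + 2 * c^2 + c^2 * m2)" .
  moreover have "coprime (b^2) (a^2)"
    using markov_triple_coprime[OF assms(1)] by (simp add: coprime_commute)
  ultimately obtain k where k: "X = b^2 * k"
    by (metis coprime_dvd_mult_right_iff dvdE dvd_triv_left)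
  have "b^2 * (a^2 * k) = b^2 * (b^2 + 2 * c^2 + c^2 * m2)"
    using aX k by (simp add: algebra_simps)
  then have "a^2 * k = b^2 + 2 * c^2 + c^2 * m2"
    using assms(1) unfolding markov_triple_def by simp
  then have b2: "b^2 = a^2 * k - c^2 * (2 + m2)" by (simp add: algebra_simps)
  have "coprime (c^2) k"
  proof (rule coprimeI)
    fix d assume d: "d dvd c^2" "d dvd k"
    then have "d dvd b^2"
      unfolding b2 by (metis dvd_diff dvd_mult dvd_mult2)
    moreover have "coprime (c^2) (b^2)"
      using markov_triple_coprime[of b c a] assms(1) markov_triple_rotate[of a b c]
      by (simp add: coprime_commute)
    ultimately show "is_unit d"
      using d(1) coprime_common_divisor by blast
  qed
  moreover have "b^2 * k = (3 * b * c - a)^2 - c^2 * m1"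
    using k unfolding X_def by simp
  ultimately show thesis using that by blast
qed

text \<open>The construction with real parameters.\<close>
locale cut_transfer =
  fixes a b c m1 m2 l :: real and V0 V1 V2 w Q :: "real \<times> real"
  assumes pos: "0 < a" "0 < b" "0 < c"
    and weights: "a^2 * m1 + b^2 * m2 = c^2"
    and l: "l = (m2 + 1) / a"
    and V1: "V1 = V0 + a^2 *\<^sub>R (b^2, - m1)"
    and V2: "V2 = V1 + b^2 *\<^sub>R - (a^2, m2)"
    and w: "w = - (a, l)"
    and Q_on_cut: "\<exists>t. Q = V2 + t *\<^sub>R w"
    and Q_on_edge: "Q \<in> closed_segment V0 V1"
begin

definition R :: "real \<times> real" where
  "R = V0 - (0, b^2 + c^2)"

lemma l_mult_a: "l * a = m2 + 1"
  using pos(1) unfolding l by simp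

lemma V2_eq: "V2 = V0 - (0, c^2)"
  using weights by (simp add: V1 V2 prod_eq_iff algebra_simps)

lemma Q_eq: "Q = V0 + (a^2 * c^2 / (b^2 + c^2)) *\<^sub>R (b^2, - m1)"
proof -
  obtain t where t: "Q = V2 + t *\<^sub>R w" using Q_on_cut by blast
  obtain s where s: "Q = (1 - s) *\<^sub>R V0 + s *\<^sub>R V1"
    using Q_on_edge unfolding closed_segment_def by blast
  have Q_s: "Q = V0 + (s * a^2) *\<^sub>R (b^2, - m1)"
    unfolding s V1 by (simp add: algebra_simps)
  have "a * (t + s * a * b^2) = 0" and Q_t: "s * a^2 * m1 = c^2 + t * l"
    using Q_s unfolding t V2_eq w by (auto simp: algebra_simps power2_eq_square)
  then have "t = - s * a * b^2"
    using pos(1) by (simp add: eq_neg_iff_add_eq_0)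
  then have "t * l = - s * b^2 * (l * a)"
    by (simp add: algebra_simps)
  with Q_t have "s * a^2 * m1 = c^2 - s * b^2 * (m2 + 1)"
    unfolding l_mult_a by simp
  then have "s * (a^2 * m1 + b^2 * m2 + b^2) = c^2"
    by (simp add: algebra_simps)
  then have "s = c^2 / (b^2 + c^2)"
    using pos unfolding weights by (simp add: field_simps add_pos_pos)
  then show ?thesis
    unfolding Q_s by (simp add: field_simps)
qed

lemma shear_Q: "shear_map V2 w Q = Q"
  using Q_on_cut shear_map_fixes_line by blast

lemma shear_V1: "shear_map V2 w V1 = R"
proof -
  have "det2 w (V1 - V2) = a * b^2 * (l * a - m2)"
    unfolding V2 w det2_def by (simp add: algebra_simps power2_eq_square)
  also have "\<dots> = b^2 * a"
    unfolding l_mult_a by simp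
  finally have "det2 w (V1 - V2) = b^2 * a" .
  then have "shear_map V2 w V1 = V1 + (b^2 * a) *\<^sub>R w"
    unfolding shear_map_def by simp
  also have "\<dots> = V0 - (0, a^2 * m1 + b^2 * (l * a))"
    unfolding V1 w by (simp add: algebra_simps power2_eq_square prod_eq_iff)
  also have "\<dots> = R"
    unfolding l_mult_a R_def weights[symmetric] by (simp add: algebra_simps prod_eq_iff)
  finally show ?thesis .
qed

lemma transferred_diagram:
  "convex hull {V0, Q, V2} \<union> shear_map V2 w ` (convex hull {Q, V1, V2}) = convex hull {V0, Q, R}"
proof -
  define \<mu> where "\<mu> = c^2 / (b^2 + c^2)"
  have "0 < \<mu>" "\<mu> < 1"
    using pos unfolding \<mu>_def by (simp_all add: field_simps add_pos_pos)
  moreover have "V2 = (1 - \<mu>) *\<^sub>R V0 + \<mu> *\<^sub>R R"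
  proof -
    have "\<mu> * (b^2 + c^2) = c^2"
      using pos unfolding \<mu>_def by (simp add: add_pos_pos)
    then show ?thesis
      unfolding V2_eq R_def by (simp add: scaleR_diff_right algebra_simps)
  qed
  moreover have "shear_map V2 w ` (convex hull {Q, V1, V2}) = convex hull {Q, V2, R}"
    unfolding shear_map_convex_hull
    using shear_Q shear_V1 shear_map_fixes_line[of V2 w 0] by (simp add: insert_commute)
  ultimately show ?thesis
    using convex_hull_3_split[of V2 \<mu> V0 R Q] by simp
qed

lemma not_collinear: "\<not> collinear {V0, Q, R}"
proof -
  have "b^2 + c^2 \<noteq> 0"
    using pos by (simp add: add_pos_pos)
  then have "det2 (Q - V0) (R - V0) = - (a^2 * b^2 * c^2)"
    unfolding Q_eq R_def det2_def by (simp add: field_simps)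
  also have "\<dots> \<noteq> 0"
    using pos by simp
  finally show ?thesis
    using not_collinear_if_det2[of "Q - V0" "R - V0" V0] by simp
qed

lemma edge_vectors:
  assumes "a * a' = b^2 + c^2" and "b^2 * k = a'^2 - c^2 * m1"
  shows "Q - V0 = (a / a' * c^2) *\<^sub>R (b^2, - m1)"
    and "R - Q = (a / a' * b^2) *\<^sub>R (- (c^2), - k)"
    and "V0 - R = (a / a' * a'^2) *\<^sub>R (0, 1)"
proof -
  have "a' \<noteq> 0"
    using assms pos by (auto simp: add_pos_pos)
  then have s: "a^2 * c^2 / (b^2 + c^2) = a / a' * c^2"
    unfolding assms(1)[symmetric] by (simp add: power2_eq_square)
  show "Q - V0 = (a / a' * c^2) *\<^sub>R (b^2, - m1)"
    unfolding Q_eq s by simp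
  have "a / a' * b^2 * k = a * a' - a / a' * c^2 * m1"
    using \<open>a' \<noteq> 0\<close> unfolding mult.assoc[of _ "b^2"] assms(2) by (simp add: field_simps power2_eq_square)
  then show "R - Q = (a / a' * b^2) *\<^sub>R (- (c^2), - k)"
    unfolding Q_eq s R_def assms(1) by (simp add: algebra_simps)
  show "V0 - R = (a / a' * a'^2) *\<^sub>R (0, 1)"
    using \<open>a' \<noteq> 0\<close> unfolding R_def assms(1)[symmetric] by (simp add: power2_eq_square)
qed

end

theorem proposition2p4:
  fixes a b c m1 m2 :: int
    and l2 :: real
    and u1 u2 u3 w1 V0 V1 V2 Q :: "real \<times> real"
    and M :: "real \<times> real \<Rightarrow> real \<times> real"
    and \<Delta>' :: "(real \<times> real) set"
  assumes markov: "a > 0" "b > 0" "c > 0" "a^2 + b^2 + c^2 = 3 * a * b * c"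
    and m_pos: "m1 > 0" "m2 > 0"
    and m_eq: "a^2 * m1 + b^2 * m2 = c^2"
    and l2_def: "l2 = real_of_int (m2 + 1) / real_of_int a"
    and u1_def: "u1 = (real_of_int (b^2), - real_of_int m1)"
    and u2_def: "u2 = - (real_of_int (a^2), real_of_int m2)"
    and u3_def: "u3 = (0, 1)"
    and w1_def: "w1 = - (real_of_int a, l2)"
    and V1_def: "V1 = V0 + real_of_int (a^2) *\<^sub>R u1"
    and V2_def: "V2 = V1 + real_of_int (b^2) *\<^sub>R u2"
    and Q_on_line: "\<exists>t::real. Q = V2 + t *\<^sub>R w1"
    and Q_on_edge: "Q \<in> closed_segment V0 V1"
    and M_def: "M = shear_map V2 w1"
    and Delta'_def: "\<Delta>' = convex hull {V0, Q, V2} \<union> M ` (convex hull {Q, V1, V2})"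
  shows "\<exists>(lam::real) P1 P2 P3. lam > 0 \<and> \<not> collinear {P1, P2, P3} \<and>
           \<Delta>' = convex hull {P1, P2, P3} \<and>
           has_affine_length (P2 - P1) (lam * real_of_int (c^2)) \<and>
           has_affine_length (P3 - P2) (lam * real_of_int (b^2)) \<and>
           has_affine_length (P1 - P3) (lam * real_of_int ((3 * b * c - a)^2))"
proof -
  have abc: "markov_triple a b c"
    using markov unfolding markov_triple_def by simp
  define a' where "a' = 3 * b * c - a"
  have aa': "real_of_int a * real_of_int a' = (real_of_int b)^2 + (real_of_int c)^2"
    using arg_cong[OF markov_vieta_product[OF abc], of real_of_int] unfolding a'_def by simp
  obtain k where k: "b^2 * k = a'^2 - c^2 * m1" "coprime (c^2) k"
    using markov_transfer_direction[OF abc m_eq] unfolding a'_def by blast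
  have k_real: "(real_of_int b)^2 * real_of_int k = (real_of_int a')^2 - (real_of_int c)^2 * real_of_int m1"
    using arg_cong[OF k(1), of real_of_int] by simp
  interpret cut_transfer "of_int a" "of_int b" "of_int c" "of_int m1" "of_int m2" l2 V0 V1 V2 w1 Q
    using markov m_eq l2_def w1_def V1_def V2_def u1_def u2_def Q_on_line Q_on_edge
    by unfold_locales (simp_all flip: of_int_power of_int_mult of_int_add)
  define lam where "lam = real_of_int a / real_of_int a'"
  note edges = edge_vectors[OF aa' k_real, folded lam_def]
  show ?thesis
  proof (intro exI conjI)
    show "0 < lam"
      unfolding lam_def using markov(1) markov_neighbour_pos[OF abc, folded a'_def] by simp
    show "\<not> collinear {V0, Q, R}" by (rule not_collinear)
    show "\<Delta>' = convex hull {V0, Q, R}"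
      unfolding Delta'_def M_def by (rule transferred_diagram)
    show "has_affine_length (Q - V0) (lam * real_of_int (c^2))"
      using has_affine_length_coprime[of "b^2" "- m1"] markov_weight_coprime[OF abc m_eq]
        \<open>0 < lam\<close> edges(1) by simp
    show "has_affine_length (R - Q) (lam * real_of_int (b^2))"
      using has_affine_length_coprime[of "- (c^2)" "- k"] k(2) \<open>0 < lam\<close> edges(2) by simp
    show "has_affine_length (V0 - R) (lam * real_of_int ((3 * b * c - a)^2))"
      using has_affine_length_coprime[of 0 1] \<open>0 < lam\<close> edges(3) unfolding a'_def by simp
  qed
qed

end
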